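(* Let $M$ be a pointed metric space and let $(m_{x_\alpha y_\alpha})_\alpha$ be a net of molecules in $\mathcal F(M)$ which converges weakly to the molecule $m_{xy}$ ($x\neq y$). Then $\lim_\alpha d(x_\alpha,x)=0$ and $\lim_\alpha d(y_\alpha,y)=0$.
   Context: A pointed metric space $M$ has a distinguished origin $0$. $\mathrm{Lip}_0(M)$ is the Banach space of real Lipschitz functions on $M$ vanishing at $0$ with the best Lipschitz constant as norm; $\delta(x)\in\mathrm{Lip}_0(M)^*$ is evaluation at $x$, and $\mathcal F(M)$ is the closed linear span of $\delta(M)$ in $\mathrm{Lip}_0(M)^*$, with $\mathcal F(M)^*=\mathrm{Lip}_0(M)$. For $x\neq y$ in $M$, the molecule is $m_{xy}=(\delta(x)-\delta(y))/d(x,y)$; all $x_\alpha\ne y_\alpha$. *)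

theory Defs
  imports "HOL-Analysis.Analysis"
begin

definition Lip0 :: "'a::metric_space \<Rightarrow> ('a \<Rightarrow> real) set" where
  "Lip0 base = {f. (\<exists>C. C-lipschitz_on UNIV f) \<and> f base = 0}"

text \<open>Action of f in Lip_0(M) = F(M)^* on the molecule m_xy.\<close>
definition mol_app :: "('a::metric_space \<Rightarrow> real) \<Rightarrow> 'a \<Rightarrow> 'a \<Rightarrow> real" where
  "mol_app f x y = (f x - f y) / dist x y"

text \<open>Weak convergence in F(M) of the net of molecules m_{xa i, ya i} (a net is
represented by a filter F on the index type) to m_xy, using F(M)^* = Lip_0(M).\<close>
definition mol_weak_conv ::
  "'a::metric_space \<Rightarrow> ('i \<Rightarrow> 'a) \<Rightarrow> ('i \<Rightarrow> 'a) \<Rightarrow> 'a \<Rightarrow> 'a \<Rightarrow> 'i filter \<Rightarrow> bool" where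
  "mol_weak_conv base xa ya x y F \<longleftrightarrow>
     (\<forall>f \<in> Lip0 base. ((\<lambda>i. mol_app f (xa i) (ya i)) \<longlongrightarrow> mol_app f x y) F)"

end

theory Submission
  imports Defs
begin

text \<open>Test the weak convergence against the tent function of height r centred at x,
with r \<le> d(x,y): it pairs with m_xy to the positive number r/d(x,y), so eventually it
pairs positively with m_{x_\<alpha> y_\<alpha>}, which forces x_\<alpha> into the ball of radius r
around x. The statement for y_\<alpha> follows by symmetry, since swapping the two points
of a molecule only changes its sign.\<close>

definition tent :: "'a::metric_space \<Rightarrow> real \<Rightarrow> 'a \<Rightarrow> real" where
  "tent c r z = max 0 (r - dist z c)"

lemma lipschitz_on_tent: "1-lipschitz_on U (tent c r)"
proof (rule lipschitz_onI)
  fix u v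
  have "\<bar>dist u c - dist v c\<bar> \<le> dist u v"
    by (metis abs_le_iff dist_commute dist_triangle2 dist_triangle3 diff_le_eq minus_diff_eq)
  moreover have "\<bar>tent c r u - tent c r v\<bar> \<le> \<bar>dist u c - dist v c\<bar>"
    by (simp add: tent_def max_def abs_if)
  ultimately show "dist (tent c r u) (tent c r v) \<le> 1 * dist u v"
    by (simp add: dist_real_def)
qed simp

lemma tent_nonneg: "0 \<le> tent c r z"
  by (simp add: tent_def)

lemma tent_pos_iff: "0 < tent c r z \<longleftrightarrow> dist z c < r"
  by (simp add: tent_def less_max_iff_disj)

lemma Lip0_diff_base:
  assumes "C-lipschitz_on UNIV f"
  shows "(\<lambda>z. f z - f base) \<in> Lip0 base"
  using lipschitz_on_diff[OF assms lipschitz_on_constant]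
  unfolding Lip0_def by auto

lemma mol_app_diff_const: "mol_app (\<lambda>z. f z - k) u v = mol_app f u v"
  by (simp add: mol_app_def)

lemma mol_app_swap: "mol_app f v u = - mol_app f u v"
  by (simp add: mol_app_def dist_commute minus_divide_left)

lemma mol_app_pos_imp_less: "0 < mol_app f u v \<Longrightarrow> f v < f u"
  by (simp add: mol_app_def zero_less_divide_iff)

lemma mol_weak_conv_swap:
  "mol_weak_conv base xa ya x y F \<Longrightarrow> mol_weak_conv base ya xa y x F"
  unfolding mol_weak_conv_def
  by (subst (1 2) mol_app_swap) (auto intro: tendsto_minus)

lemma mol_weak_conv_tendsto_fst:
  assumes "x \<noteq> y" and conv: "mol_weak_conv base xa ya x y F"
  shows "((\<lambda>i. dist (xa i) x) \<longlongrightarrow> 0) F"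
proof (rule tendstoI)
  fix e :: real
  assume "e > 0"
  define r where "r = min e (dist x y)"
  have r: "0 < r" "r \<le> e" "r \<le> dist x y" "0 < dist x y"
    using \<open>e > 0\<close> \<open>x \<noteq> y\<close> by (auto simp: r_def)
  have "((\<lambda>i. mol_app (\<lambda>z. tent x r z - tent x r base) (xa i) (ya i))
          \<longlongrightarrow> mol_app (\<lambda>z. tent x r z - tent x r base) x y) F"
    using conv Lip0_diff_base[OF lipschitz_on_tent] unfolding mol_weak_conv_def by (rule bspec)
  then have lim: "((\<lambda>i. mol_app (tent x r) (xa i) (ya i)) \<longlongrightarrow> mol_app (tent x r) x y) F"
    unfolding mol_app_diff_const .
  have "mol_app (tent x r) x y = r / dist x y"
    using r by (simp add: mol_app_def tent_def dist_commute)
  then have "0 < mol_app (tent x r) x y"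
    using r by simp
  from order_tendstoD(1)[OF lim this]
  show "eventually (\<lambda>i. dist (dist (xa i) x) 0 < e) F"
  proof (rule eventually_mono)
    fix i
    assume "0 < mol_app (tent x r) (xa i) (ya i)"
    then have "tent x r (ya i) < tent x r (xa i)"
      by (rule mol_app_pos_imp_less)
    then have "0 < tent x r (xa i)"
      using tent_nonneg[of x r "ya i"] by linarith
    then show "dist (dist (xa i) x) 0 < e"
      using r by (simp add: tent_pos_iff)
  qed
qed

theorem lemma2p2:
  fixes base x y :: "'a::metric_space" and xa ya :: "'i \<Rightarrow> 'a" and F :: "'i filter"
  assumes "x \<noteq> y"
    and "\<forall>i. xa i \<noteq> ya i"
    and "mol_weak_conv base xa ya x y F"
  shows "((\<lambda>i. dist (xa i) x) \<longlongrightarrow> 0) F \<and> ((\<lambda>i. dist (ya i) y) \<longlongrightarrow> 0) F"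
proof
  show "((\<lambda>i. dist (xa i) x) \<longlongrightarrow> 0) F"
    using mol_weak_conv_tendsto_fst[OF assms(1,3)] .
  have "y \<noteq> x" and "mol_weak_conv base ya xa y x F"
    using assms(1) mol_weak_conv_swap[OF assms(3)] by auto
  then show "((\<lambda>i. dist (ya i) y) \<longlongrightarrow> 0) F"
    by (rule mol_weak_conv_tendsto_fst)
qed

end
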